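(* Let $\Sigma$ and $\Gamma$ be finite alphabets, each with at least two letters, and let $a,b \in \Sigma$ be distinct letters. For every integer $n \ge 2$, $\mathrm{E}_{\mathcal{I}}((ab)^n ba) = 1 + \frac{2}{n-1}$.
   Context: For a nonempty word $v$ and integer $p\ge 0$, $v^{p/|v|}$ denotes the prefix of length $p$ of $vvv\cdots$. For a nonempty finite word $u$, $\mathrm{E}(u) = \sup\{ r \in \mathbb{Q} : u = v^r \text{ for some nonempty word } v\}$. $\mathcal{I}$ is the set of injective morphisms $\Sigma^* \to \Gamma^*$, and for $w\in\Sigma^+$, $\mathrm{E}_{\mathcal{I}}(w) = \sup\{\mathrm{E}(h(w)) : h \in \mathcal{I}\}$. *)

theory Defs
  imports Complex_Main "HOL-Library.Extended_Real" "HOL-Library.Cardinality"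
begin

text \<open>Words are lists. For a nonempty word v and p \<ge> 0, v^(p/|v|) is the prefix of
length p of vvv...; p copies of v suffice since |v| \<ge> 1.\<close>
definition word_pow :: "'a list \<Rightarrow> nat \<Rightarrow> 'a list" where
  "word_pow v p = take p (concat (replicate p v))"

definition word_exp :: "'a list \<Rightarrow> real" where
  "word_exp u = Sup {r. \<exists>v p. v \<noteq> [] \<and> r = real p / real (length v) \<and> u = word_pow v p}"

definition morph :: "('a \<Rightarrow> 'b list) \<Rightarrow> 'a list \<Rightarrow> 'b list" where
  "morph f w = concat (map f w)"

definition inj_exp :: "'b itself \<Rightarrow> 'a list \<Rightarrow> ereal" where
  "inj_exp _ w = Sup {ereal (word_exp (morph f w)) | f :: 'a \<Rightarrow> 'b list. inj (morph f)}"

end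

theory Submission
  imports Defs "HOL-Library.Countable" "HOL-Library.Sublist" "HOL-Real_Asymp.Real_Asymp"
begin

text \<open>
  Exponents are governed by periods: \<open>E(u) = |u| / q\<close> for the least period \<open>q\<close> of \<open>u\<close>.
  If \<open>h\<close> is injective, \<open>X = h a\<close> and \<open>Y = h b\<close> do not commute. A period \<open>q < (n-1)|XY|\<close>
  of \<open>h((ab)\<^sup>n ba) = (XY)\<^sup>n YX\<close> would combine, by Fine and Wilf, with the period \<open>|XY|\<close> of
  the prefix \<open>(XY)\<^sup>n\<close> into a period of the whole word dividing \<open>|XY|\<close>; comparing the
  first and last \<open>|XY|\<close> letters then gives \<open>XY = YX\<close>. Hence \<open>E(h((ab)\<^sup>n ba)) \<le> (n+1)/(n-1)\<close>.
  Conversely, for \<open>X = x(yx)\<^sup>k\<close> and \<open>Y = yx\<close> the word \<open>(XY)\<^sup>n YX\<close> has period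
  \<open>(n-1)|XY| + 2\<close>, and the resulting exponents tend to \<open>(n+1)/(n-1)\<close> as \<open>k \<rightarrow> \<infinity>\<close>;
  such \<open>X\<close> and \<open>Y\<close> are the images of \<open>a\<close> and \<open>b\<close> under a prefix code.
\<close>

definition period :: "'a list \<Rightarrow> nat \<Rightarrow> bool" where
  "period u q \<longleftrightarrow> (\<forall>i. i + q < length u \<longrightarrow> u ! i = u ! (i + q))"

lemma periodI: "(\<And>i. i + q < length u \<Longrightarrow> u ! i = u ! (i + q)) \<Longrightarrow> period u q"
  unfolding period_def by blast

lemma periodD: "period u q \<Longrightarrow> i + q < length u \<Longrightarrow> u ! i = u ! (i + q)"
  unfolding period_def by blast

lemma period_take: "period u q \<Longrightarrow> period (take N u) q"
  by (intro periodI) (simp add: periodD)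

lemma period_iff_prefix_drop: "period u q \<longleftrightarrow> prefix (drop q u) u"
proof
  assume "period u q"
  then have "drop q u = take (length u - q) u"
    by (intro nth_equalityI) (auto simp: periodD add.commute)
  then show "prefix (drop q u) u"
    by (metis take_is_prefix)
next
  assume "prefix (drop q u) u"
  then obtain r where u: "drop q u @ r = u"
    by (metis prefix_def)
  show "period u q"
  proof (rule periodI)
    fix i assume "i + q < length u"
    then have "(drop q u @ r) ! i = drop q u ! i"
      by (simp add: nth_append_left)
    with \<open>i + q < length u\<close> show "u ! i = u ! (i + q)"
      by (simp add: u add.commute)
  qed
qed

lemma period_mult: "period u d \<Longrightarrow> period u (k * d)"
proof (induction k)
  case 0
  then show ?case by (simp add: period_def)
next
  case (Suc k)
  show ?case
  proof (rule periodI)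
    fix i assume i: "i + Suc k * d < length u"
    then have "u ! i = u ! (i + k * d)"
      using Suc by (simp add: periodD)
    also have "\<dots> = u ! (i + Suc k * d)"
      using periodD[OF Suc.prems, of "i + k * d"] i by (simp add: algebra_simps)
    finally show "u ! i = u ! (i + Suc k * d)" .
  qed
qed

lemma period_dvd: "period u d \<Longrightarrow> d dvd q \<Longrightarrow> period u q"
  by (metis dvd_div_mult_self period_mult)

lemma nth_mod_period:
  assumes "period u q" "0 < q" "i < length u"
  shows "u ! i = u ! (i mod q)"
  using periodD[OF period_mult[OF assms(1)], of "i mod q" "i div q"] assms(3)
  by (simp add: add.commute)

lemma period_diff:
  assumes p: "period u p" and q: "period u q" and "p < q" "p + q \<le> length u"
  shows "period u (q - p)"
proof (rule periodI)
  fix i assume i: "i + (q - p) < length u"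
  show "u ! i = u ! (i + (q - p))"
  proof (cases "i + q < length u")
    case True
    then show ?thesis
      using periodD[OF q, of i] periodD[OF p, of "i + (q - p)"] \<open>p < q\<close> by simp
  next
    case False
    then have "p \<le> i"
      using \<open>p + q \<le> length u\<close> by linarith
    then show ?thesis
      using periodD[OF p, of "i - p"] periodD[OF q, of "i - p"] i \<open>p < q\<close> by simp
  qed
qed

lemma period_gcd:
  "period u p \<Longrightarrow> period u q \<Longrightarrow> p + q \<le> length u \<Longrightarrow> period u (gcd p q)"
proof (induction "p + q" arbitrary: p q rule: less_induct)
  case less
  consider "p = 0" | "q = 0" | "p = q" | "0 < p" "p < q" | "0 < q" "q < p"
    by linarith
  then show ?case
  proof cases
    case 4
    then have "period u (gcd p (q - p))"
      using less period_diff[OF less.prems(1,2)] by simp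
    then show ?thesis
      using 4 by (metis gcd.commute gcd_diff1_nat less_imp_le)
  next
    case 5
    then have "period u (gcd (p - q) q)"
      using less period_diff[OF less.prems(2,1)] by simp
    then show ?thesis
      using 5 by (simp add: gcd_diff1_nat)
  qed (use less.prems in simp_all)
qed

lemma period_extend:
  assumes q: "period u q" "0 < q" and d: "period (take N u) d" and "q + d \<le> N"
  shows "period u d"
proof -
  have "u ! i = u ! (i + d)" if "i + d < length u" for i
    using that
  proof (induction i rule: less_induct)
    case (less i)
    show ?case
    proof (cases "i + d < N")
      case True
      then show ?thesis
        using periodD[OF d, of i] less.prems by simp
    next
      case False
      then have "q \<le> i"
        using \<open>q + d \<le> N\<close> by linarith
      then have "u ! (i - q) = u ! (i - q + d)"
        using less q(2) by simp
      then show ?thesis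
        using periodD[OF q(1), of "i - q"] periodD[OF q(1), of "i - q + d"] less.prems \<open>q \<le> i\<close>
        by simp
    qed
  qed
  then show ?thesis
    by (rule periodI)
qed

lemma nth_concat_replicate:
  "i < k * length v \<Longrightarrow> concat (replicate k v) ! i = v ! (i mod length v)"
proof (induction k arbitrary: i)
  case (Suc k)
  then show ?case
    by (cases "i < length v") (auto simp: nth_append le_mod_geq)
qed simp

lemma length_concat_replicate [simp]: "length (concat (replicate k v)) = k * length v"
  by (induction k) auto

lemma period_concat_replicate: "period (concat (replicate k v)) (length v)"
  by (intro periodI) (simp add: nth_concat_replicate)

lemma concat_replicate_append_same:
  "concat (replicate k v) @ v @ w = v @ concat (replicate k v) @ w"
  by (induction k) auto

lemma length_word_pow: "v \<noteq> [] \<Longrightarrow> length (word_pow v p) = p"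
  by (cases v) (auto simp: word_pow_def)

lemma nth_word_pow: "v \<noteq> [] \<Longrightarrow> i < p \<Longrightarrow> word_pow v p ! i = v ! (i mod length v)"
  unfolding word_pow_def
  by (subst nth_take) (auto intro!: nth_concat_replicate less_le_trans[of i p] simp: Suc_le_eq)

lemma period_word_pow: "v \<noteq> [] \<Longrightarrow> period (word_pow v p) (length v)"
  by (intro periodI) (simp add: length_word_pow nth_word_pow)

lemma word_pow_take_period:
  assumes "period u q" "0 < q"
  shows "word_pow (take q u) (length u) = u"
proof (cases "u = []")
  case False
  then have ne: "take q u \<noteq> []"
    using assms(2) by simp
  show ?thesis
  proof (rule nth_equalityI)
    show "length (word_pow (take q u) (length u)) = length u"
      using ne by (rule length_word_pow)
    fix i assume "i < length (word_pow (take q u) (length u))"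
    then have i: "i < length u"
      using ne by (simp add: length_word_pow)
    then have "word_pow (take q u) (length u) ! i = take q u ! (i mod length (take q u))"
      using ne by (simp add: nth_word_pow)
    also have "\<dots> = u ! (i mod q)"
      using i assms(2) by (cases "q \<le> length u") (simp_all add: min_def)
    also have "\<dots> = u ! i"
      using nth_mod_period[OF assms i] ..
    finally show "word_pow (take q u) (length u) ! i = u ! i" .
  qed
qed (simp add: word_pow_def)

lemma bdd_above_word_exponents:
  "bdd_above {r. \<exists>v p. v \<noteq> [] \<and> r = real p / real (length v) \<and> u = word_pow v p}"
proof (rule bdd_aboveI)
  fix r assume "r \<in> {r. \<exists>v p. v \<noteq> [] \<and> r = real p / real (length v) \<and> u = word_pow v p}"
  then obtain v p where v: "v \<noteq> []" "r = real p / real (length v)" "u = word_pow v p"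
    by blast
  then have "real p / real (length v) \<le> real p / 1"
    by (intro divide_left_mono) (auto simp: Suc_le_eq)
  then show "r \<le> real (length u)"
    using v by (simp add: length_word_pow)
qed

lemma le_word_exp_period:
  assumes "period u q" "0 < q" "q \<le> length u"
  shows "real (length u) / real q \<le> word_exp u"
  unfolding word_exp_def
proof (rule cSup_upper[OF _ bdd_above_word_exponents], intro CollectI exI conjI)
  show "take q u \<noteq> []"
    using assms(2,3) by auto
  show "u = word_pow (take q u) (length u)"
    using word_pow_take_period[OF assms(1,2)] by simp
qed (use assms(3) in simp)

lemma word_exp_leI:
  assumes "u \<noteq> []" "\<And>q. 0 < q \<Longrightarrow> period u q \<Longrightarrow> real (length u) / real q \<le> t"
  shows "word_exp u \<le> t"
  unfolding word_exp_def
proof (rule cSup_least)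
  have "period u (length u)"
    by (simp add: period_def)
  then have "u = word_pow u (length u)"
    using word_pow_take_period[of u "length u"] assms(1) by simp
  then show "{r. \<exists>v p. v \<noteq> [] \<and> r = real p / real (length v) \<and> u = word_pow v p} \<noteq> {}"
    using assms(1) by blast
next
  fix r assume "r \<in> {r. \<exists>v p. v \<noteq> [] \<and> r = real p / real (length v) \<and> u = word_pow v p}"
  then obtain v p where v: "v \<noteq> []" "r = real p / real (length v)" "u = word_pow v p"
    by blast
  then have "length u = p" "period u (length v)"
    by (simp_all add: length_word_pow period_word_pow)
  then show "r \<le> t"
    using assms(2)[of "length v"] v by simp
qed

lemma morph_Nil [simp]: "morph f [] = []"
  by (simp add: morph_def)

lemma morph_Cons [simp]: "morph f (x # xs) = f x @ morph f xs"
  by (simp add: morph_def)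

lemma morph_append [simp]: "morph f (xs @ ys) = morph f xs @ morph f ys"
  by (simp add: morph_def)

lemma morph_concat_replicate [simp]:
  "morph f (concat (replicate k xs)) = concat (replicate k (morph f xs))"
  by (induction k) auto

lemma inj_morph_prefix_code:
  assumes "\<And>z. f z \<noteq> []" and "\<And>z z' s t. f z @ s = f z' @ t \<Longrightarrow> z = z'"
  shows "inj (morph f)"
proof (rule injI)
  show "morph f x = morph f y \<Longrightarrow> x = y" for x y
  proof (induction x arbitrary: y)
    case Nil
    then show ?case
      using assms(1) by (cases y) auto
  next
    case (Cons z x)
    then obtain z' y' where y: "y = z' # y'"
      using assms(1) by (cases y) auto
    with Cons.prems have "f z @ morph f x = f z' @ morph f y'"
      by simp
    moreover from this have "z = z'"
      by (rule assms(2))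
    ultimately show ?case
      using Cons.IH y by simp
  qed
qed

text \<open>Every image \<open>f z\<close> has the shape \<open>y\<^sup>k x \<dots>\<close> with \<open>k\<close> depending injectively on \<open>z\<close>,
  so the length of the leading run of \<open>y\<close> decodes the first letter.\<close>

lemma exists_inj_morph:
  fixes a b :: "'a::countable" and x y :: 'b and v :: "'b list"
  assumes "a \<noteq> b" "x \<noteq> y"
  shows "\<exists>f. inj (morph f) \<and> f a = x # v \<and> f b = [y, x]"
proof -
  define k :: "'a \<Rightarrow> nat" where
    "k z = (if z = a then 0 else if z = b then 1 else to_nat z + 2)" for z
  define f where "f z = replicate (k z) y @ x # (if z = a then v else [])" for z
  have run: "length (takeWhile (\<lambda>c. c = y) (replicate j y @ x # s)) = j" for j s
    using assms(2) by (induction j) auto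
  have key: "k z = length (takeWhile (\<lambda>c. c = y) (f z @ s))" for z s
    using run[of "k z"] by (simp add: f_def)
  have "inj k"
    by (rule injI) (simp add: k_def split: if_splits)
  moreover have "k z = k z'" if "f z @ s = f z' @ t" for z z' s t
    using key[of z s] key[of z' t] that by simp
  ultimately have prefix_free: "z = z'" if "f z @ s = f z' @ t" for z z' s t
    using that by (blast dest: injD)
  have "inj (morph f)"
    by (rule inj_morph_prefix_code[OF _ prefix_free]) (simp add: f_def)
  moreover have "f a = x # v" "f b = [y, x]"
    using assms(1) by (simp_all add: f_def k_def)
  ultimately show ?thesis
    by blast
qed

lemma period_ge_of_not_commute:
  assumes "X @ Y \<noteq> Y @ X" "0 < q" and per: "period (concat (replicate n (X @ Y)) @ Y @ X) q"
  shows "(n - 1) * length (X @ Y) \<le> q"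
proof (rule ccontr)
  define m where "m = length (X @ Y)"
  define u where "u = concat (replicate n (X @ Y)) @ Y @ X"
  define P where "P = take (n * m) u"
  assume "\<not> (n - 1) * length (X @ Y) \<le> q"
  then have "q < (n - 1) * m"
    by (simp add: m_def)
  then have "0 < (n - 1) * m"
    by linarith
  then have m: "0 < m" and "1 \<le> n"
    by auto
  then have n: "n * m = (n - 1) * m + m"
    by (cases n) auto
  have P: "P = concat (replicate n (X @ Y))"
    by (simp add: P_def u_def m_def)
  have "period P q"
    unfolding P_def u_def using per by (rule period_take)
  moreover have "period P m"
    unfolding P m_def by (rule period_concat_replicate)
  moreover have "q + m \<le> length P"
    using \<open>q < (n - 1) * m\<close> n by (simp add: P m_def)
  ultimately have "period P (gcd q m)"
    by (rule period_gcd)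
  moreover have "q + gcd q m \<le> n * m"
    using \<open>q < (n - 1) * m\<close> n gcd_le2_nat[of m q] m by linarith
  ultimately have "period u (gcd q m)"
    unfolding P_def by (rule period_extend[OF per[folded u_def] \<open>0 < q\<close>])
  then have "period u (n * m)"
    by (rule period_dvd) simp
  then have "prefix (Y @ X) u"
    by (simp add: period_iff_prefix_drop u_def m_def)
  moreover have "prefix (X @ Y) u"
    using \<open>1 \<le> n\<close> by (cases n) (simp_all add: u_def)
  ultimately have "X @ Y = Y @ X"
    by (auto simp: prefix_def append_eq_append_conv simp del: append_assoc)
  with assms(1) show False ..
qed

lemma word_exp_le_of_not_commute:
  assumes "X @ Y \<noteq> Y @ X" "2 \<le> n"
  shows "word_exp (concat (replicate n (X @ Y)) @ Y @ X) \<le> (real n + 1) / (real n - 1)"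
proof -
  define m where "m = length (X @ Y)"
  define u where "u = concat (replicate n (X @ Y)) @ Y @ X"
  have m: "0 < m"
    using assms(1) by (auto simp: m_def)
  have "word_exp u \<le> (real n + 1) / (real n - 1)"
  proof (rule word_exp_leI)
    show "u \<noteq> []"
      using assms(1) by (auto simp: u_def)
    fix q assume "0 < q" "period u q"
    then have "(n - 1) * m \<le> q"
      unfolding m_def u_def by (rule period_ge_of_not_commute[OF assms(1)])
    then have "real (n - 1) * real m \<le> real q"
      by (metis of_nat_le_iff of_nat_mult)
    have "real (length u) / real q = real (n + 1) * real m / real q"
      by (simp add: u_def m_def algebra_simps)
    also have "\<dots> \<le> real (n + 1) * real m / (real (n - 1) * real m)"
      using \<open>real (n - 1) * real m \<le> real q\<close> assms(2) m \<open>0 < q\<close>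
      by (intro divide_left_mono mult_pos_pos) auto
    also have "\<dots> = (real n + 1) / (real n - 1)"
      using assms(2) m by (simp add: of_nat_diff)
    finally show "real (length u) / real q \<le> (real n + 1) / (real n - 1)" .
  qed
  then show ?thesis
    by (simp add: u_def)
qed

text \<open>For \<open>X = x (y x)\<^sup>k\<close> and \<open>Y = y x\<close>, the word \<open>(XY)\<^sup>n YX\<close> has the border
  \<open>XYX\<close>, only two letters shorter than \<open>2|XY|\<close>.\<close>

lemma period_alternating_image:
  fixes x y :: 'b and k n :: nat
  defines "X \<equiv> x # concat (replicate k [y, x])" and "Y \<equiv> [y, x]"
  assumes "2 \<le> n"
  shows "period (concat (replicate n (X @ Y)) @ Y @ X) ((n - 1) * length (X @ Y) + 2)"
proof -
  obtain n' where n: "n = Suc (Suc n')"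
    using assms(3) by (metis add_2_eq_Suc le_Suc_ex)
  have X: "X = x # concat (replicate k Y)"
    by (simp add: X_def Y_def)
  have XYYX: "X @ Y @ Y @ X = x # Y @ concat (replicate k Y) @ Y @ X"
    unfolding X by (simp add: concat_replicate_append_same)
  have border: "drop 2 (X @ Y @ Y @ X) = X @ Y @ X"
    unfolding XYYX by (simp add: X Y_def)
  have "concat (replicate n (X @ Y)) @ Y @ X = concat (replicate (n - 1) (X @ Y)) @ X @ Y @ Y @ X"
    by (simp add: n concat_replicate_append_same[of n' "X @ Y", simplified])
  then have "drop ((n - 1) * length (X @ Y) + 2) (concat (replicate n (X @ Y)) @ Y @ X) = X @ Y @ X"
    using border by (simp del: replicate.simps)
  moreover have "prefix (X @ Y @ X) (concat (replicate n (X @ Y)) @ Y @ X)"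
    by (simp add: n prefix_def)
  ultimately show ?thesis
    by (simp add: period_iff_prefix_drop)
qed

lemma word_exp_alternating_image_ge:
  fixes x y :: 'b and k n :: nat
  defines "X \<equiv> x # concat (replicate k [y, x])" and "Y \<equiv> [y, x]"
  assumes "2 \<le> n"
  shows "real ((n + 1) * (2 * k + 3)) / real ((n - 1) * (2 * k + 3) + 2)
    \<le> word_exp (concat (replicate n (X @ Y)) @ Y @ X)"
proof -
  define u where "u = concat (replicate n (X @ Y)) @ Y @ X"
  have len_XY: "length (X @ Y) = 2 * k + 3"
    by (simp add: X_def Y_def)
  have "period u ((n - 1) * length (X @ Y) + 2)"
    unfolding u_def X_def Y_def by (rule period_alternating_image[OF assms(3)])
  then have per: "period u ((n - 1) * (2 * k + 3) + 2)"
    by (simp only: len_XY)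
  have len: "length u = (n + 1) * (2 * k + 3)"
    using len_XY by (simp add: u_def algebra_simps)
  have "(n - 1) * (2 * k + 3) + 2 \<le> (n + 1) * (2 * k + 3)"
    by (simp add: algebra_simps)
  then have "real (length u) / real ((n - 1) * (2 * k + 3) + 2) \<le> word_exp u"
    using per len by (intro le_word_exp_period) simp_all
  then have "real ((n + 1) * (2 * k + 3)) / real ((n - 1) * (2 * k + 3) + 2) \<le> word_exp u"
    by (simp only: len)
  then show ?thesis
    by (simp only: u_def)
qed

lemma inj_exp_leI:
  assumes "\<And>f :: 'a \<Rightarrow> 'b list. inj (morph f) \<Longrightarrow> word_exp (morph f w) \<le> t"
  shows "inj_exp TYPE('b) w \<le> ereal t"
  unfolding inj_exp_def using assms by (auto intro!: Sup_least)

lemma le_inj_expI: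
  fixes f :: "'a \<Rightarrow> 'b list"
  assumes "inj (morph f)" "r \<le> word_exp (morph f w)"
  shows "ereal r \<le> inj_exp TYPE('b) w"
  unfolding inj_exp_def using assms by (auto intro!: Sup_upper2)

lemma inj_exp_ab_pow_ba_le:
  assumes "a \<noteq> b" "2 \<le> n"
  shows "inj_exp TYPE('b) (concat (replicate n [a, b]) @ [b, a]) \<le> (real n + 1) / (real n - 1)"
proof (rule inj_exp_leI)
  fix f :: "'a \<Rightarrow> 'b list" assume "inj (morph f)"
  then have "morph f [a, b] \<noteq> morph f [b, a]"
    using assms(1) by (metis injD list.inject)
  then show "word_exp (morph f (concat (replicate n [a, b]) @ [b, a])) \<le> (real n + 1) / (real n - 1)"
    using word_exp_le_of_not_commute[of "f a" "f b" n] assms(2) by simp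
qed

lemma inj_exp_ab_pow_ba_ge:
  fixes a b :: "'a::countable" and x y :: 'b
  assumes "a \<noteq> b" "x \<noteq> y" "2 \<le> n"
  shows "ereal (real ((n + 1) * (2 * k + 3)) / real ((n - 1) * (2 * k + 3) + 2))
    \<le> inj_exp TYPE('b) (concat (replicate n [a, b]) @ [b, a])"
proof -
  define X where "X = x # concat (replicate k [y, x])"
  obtain f :: "'a \<Rightarrow> 'b list" where f: "inj (morph f)" and "f a = X" "f b = [y, x]"
    using exists_inj_morph[OF assms(1,2)] unfolding X_def by blast
  then have "morph f (concat (replicate n [a, b]) @ [b, a]) = concat (replicate n (X @ [y, x])) @ [y, x] @ X"
    by simp
  then show ?thesis
    using le_inj_expI[OF f] word_exp_alternating_image_ge[OF assms(3), where x = x and y = y and k = k]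
    unfolding X_def by simp
qed

lemma tendsto_alternating_image_ratio:
  assumes "2 \<le> n"
  shows "(\<lambda>k. real ((n + 1) * (2 * k + 3)) / real ((n - 1) * (2 * k + 3) + 2))
    \<longlonglongrightarrow> (real n + 1) / (real n - 1)"
proof -
  have "(\<lambda>k. 2 / real (2 * k + 3)) \<longlonglongrightarrow> 0"
    by real_asymp
  then have "(\<lambda>k. (real n + 1) / (real n - 1 + 2 / real (2 * k + 3)))
      \<longlonglongrightarrow> (real n + 1) / (real n - 1 + 0)"
    using assms by (intro tendsto_intros) auto
  moreover have "real ((n + 1) * (2 * k + 3)) / real ((n - 1) * (2 * k + 3) + 2)
      = (real n + 1) / (real n - 1 + 2 / real (2 * k + 3))" for k
    using assms by (simp add: of_nat_diff field_simps)
  ultimately show ?thesis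
    by simp
qed

theorem theorem8:
  fixes a b :: "'a::finite" and n :: nat
  assumes "CARD('a) \<ge> 2" and "CARD('b::finite) \<ge> 2"
    and "a \<noteq> b" and "n \<ge> 2"
  shows "inj_exp TYPE('b) (concat (replicate n [a, b]) @ [b, a])
         = ereal (1 + 2 / (real n - 1))"
proof -
  \<comment> \<open>The hypothesis on \<open>CARD('a)\<close> is implied by \<open>a \<noteq> b\<close>.\<close>
  obtain x y :: 'b where "x \<noteq> y"
    using assms(2) card_le_Suc0_iff_eq[of "UNIV :: 'b set"] by auto
  have "(\<lambda>k. ereal (real ((n + 1) * (2 * k + 3)) / real ((n - 1) * (2 * k + 3) + 2)))
      \<longlonglongrightarrow> ereal ((real n + 1) / (real n - 1))"
    using tendsto_alternating_image_ratio[OF assms(4)] by simp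
  then have "ereal ((real n + 1) / (real n - 1)) \<le> inj_exp TYPE('b) (concat (replicate n [a, b]) @ [b, a])"
    by (rule LIMSEQ_le_const2) (use inj_exp_ab_pow_ba_ge[OF assms(3) \<open>x \<noteq> y\<close> assms(4)] in blast)
  moreover have "1 + 2 / (real n - 1) = (real n + 1) / (real n - 1)"
    using assms(4) by (simp add: field_simps)
  ultimately show ?thesis
    using inj_exp_ab_pow_ba_le[where 'b = 'b, OF assms(3,4)] by simp
qed

end
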